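(* Let $G$ be a periodic group such that the set of primes dividing the orders of elements of $G$ is exactly $\{2,3\}$, for any two elements $g,h\in G$ of orders at most $4$ the order of $gh$ is at most $9$, and the centralizer of every involution of $G$ is a locally cyclic $2$-group. Let $x\in G$ have order $3$ and $a\in G$ have order $2$ with $a^{-1}xa=x^{-1}$. Then $C_G(x)$ is an abelian $3$-group of exponent at most $9$, and $a$ acts on $C_G(x)$ by inversion (i.e. $a^{-1}ca=c^{-1}$ for all $c\in C_G(x)$). *)

theory Defs
  imports "HOL-Algebra.Algebra" "HOL-Computational_Algebra.Primes"
begin

definition centralizer_elem :: "('a, 'b) monoid_scheme \<Rightarrow> 'a \<Rightarrow> 'a set" where
  "centralizer_elem G x = {c \<in> carrier G. c \<otimes>\<^bsub>G\<^esub> x = x \<otimes>\<^bsub>G\<^esub> c}"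

text \<open>Periodic group: every element has finite order (group.ord is 0 for elements of infinite order).\<close>
definition periodic_group :: "('a, 'b) monoid_scheme \<Rightarrow> bool" where
  "periodic_group G \<longleftrightarrow> group G \<and> (\<forall>g \<in> carrier G. group.ord G g \<noteq> 0)"

definition is_p_subgroup :: "('a, 'b) monoid_scheme \<Rightarrow> nat \<Rightarrow> 'a set \<Rightarrow> bool" where
  "is_p_subgroup G p H \<longleftrightarrow> subgroup H G \<and> (\<forall>h \<in> H. \<exists>k::nat. group.ord G h = p ^ k)"

definition locally_cyclic :: "('a, 'b) monoid_scheme \<Rightarrow> 'a set \<Rightarrow> bool" where
  "locally_cyclic G H \<longleftrightarrow> subgroup H G \<and>
     (\<forall>F. F \<subseteq> H \<and> finite F \<longrightarrow> (\<exists>c \<in> H. generate G F = generate G {c}))"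

definition abelian_subset :: "('a, 'b) monoid_scheme \<Rightarrow> 'a set \<Rightarrow> bool" where
  "abelian_subset G H \<longleftrightarrow> (\<forall>c \<in> H. \<forall>d \<in> H. c \<otimes>\<^bsub>G\<^esub> d = d \<otimes>\<^bsub>G\<^esub> c)"

text \<open>Exponent of a periodic subgroup H at most n: the least common multiple of the element orders
  is positive and at most n.\<close>
definition exponent_le :: "('a, 'b) monoid_scheme \<Rightarrow> 'a set \<Rightarrow> nat \<Rightarrow> bool" where
  "exponent_le G H n \<longleftrightarrow> (\<exists>e. 0 < e \<and> e \<le> n \<and> (\<forall>h \<in> H. h [^]\<^bsub>G\<^esub> e = \<one>\<^bsub>G\<^esub>))"

end

theory Submission
  imports Defs
begin

text \<open>
  Write \<open>C = C\<^sub>G(x)\<close>. If an element of \<open>C\<close> had even order, a suitable power of it would be an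
  involution centralising \<open>x\<close>, forcing the order 3 of \<open>x\<close> to be a power of 2; so \<open>C\<close> is a
  3-group. For \<open>c \<in> C\<close> the element \<open>g = ac\<close> still inverts \<open>x\<close>, so \<open>w = g\<^sup>2 \<in> C\<close> has odd
  order \<open>n\<close>. Then either \<open>g\<close> is a power of \<open>w\<close>, which would put \<open>a\<close> into \<open>C\<close>, or \<open>g\<^sup>n\<close> is an
  involution commuting with \<open>w\<close>, so the odd order of \<open>w\<close> is a power of 2 and \<open>w = 1\<close>. Hence
  \<open>a\<close> inverts every element of \<open>C\<close>, which makes \<open>C\<close> abelian; finally \<open>c = a \<cdot> ac\<close> is a
  product of two elements of order at most 2, so \<open>|c| \<le> 9\<close>.
\<close>

lemma (in group) square_eq_one_iff_ord_dvd_two: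
  assumes "g \<in> carrier G"
  shows "g \<otimes> g = \<one> \<longleftrightarrow> ord g dvd 2"
  using pow_eq_id[OF assms, of 2] assms by (simp add: numeral_2_eq_2)

lemma (in group) ord_eq_two_if_square_eq_one:
  assumes "g \<in> carrier G" "g \<otimes> g = \<one>" "g \<noteq> \<one>"
  shows "ord g = 2"
proof -
  have "ord g dvd 2" "ord g \<noteq> 1"
    using assms square_eq_one_iff_ord_dvd_two ord_eq_1 by auto
  then show ?thesis
    using two_is_prime_nat by (metis prime_nat_iff)
qed

lemma (in group) inv_eq_self_if_ord_two:
  assumes "a \<in> carrier G" "ord a = 2"
  shows "inv a = a"
  using assms square_eq_one_iff_ord_dvd_two inv_equality by auto

lemma (in group) conj_eq_iff_commute:
  assumes "c \<in> carrier G" "x \<in> carrier G"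
  shows "inv c \<otimes> x \<otimes> c = x \<longleftrightarrow> c \<otimes> x = x \<otimes> c"
  using assms by (metis inv_closed inv_solve_left m_assoc m_closed)

lemma (in group) conj_inv:
  assumes "g \<in> carrier G" "x \<in> carrier G"
  shows "inv g \<otimes> inv x \<otimes> g = inv (inv g \<otimes> x \<otimes> g)"
  using assms by (simp add: inv_mult_group m_assoc)

lemma (in group) centralizer_elem_conj:
  assumes "x \<in> carrier G"
  shows "centralizer_elem G x = {c \<in> carrier G. inv c \<otimes> x \<otimes> c = x}"
  using assms conj_eq_iff_commute unfolding centralizer_elem_def by auto

lemma (in group) subgroup_centralizer_elem:
  assumes "x \<in> carrier G"
  shows "subgroup (centralizer_elem G x) G"
proof (rule subgroupI)
  fix c assume "c \<in> centralizer_elem G x"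
  then show "inv c \<in> centralizer_elem G x"
    using assms unfolding centralizer_elem_def by (auto simp: inv_solve_left inv_solve_right m_assoc)
next
  fix c d assume "c \<in> centralizer_elem G x" "d \<in> centralizer_elem G x"
  then show "c \<otimes> d \<in> centralizer_elem G x"
    using assms unfolding centralizer_elem_def by (auto simp: m_assoc) (simp flip: m_assoc)
qed (use assms in \<open>auto simp: centralizer_elem_def\<close>)

lemma (in group) pow_in_centralizer_elem:
  assumes "x \<in> carrier G" "c \<in> centralizer_elem G x"
  shows "c [^] (k::nat) \<in> centralizer_elem G x"
  using assms group_commutes_pow unfolding centralizer_elem_def by auto

lemma (in group) inverts_mult_centralizer_elem:
  assumes "x \<in> carrier G" "g \<in> carrier G" "inv g \<otimes> x \<otimes> g = inv x"
    and "c \<in> centralizer_elem G x"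
  shows "inv (g \<otimes> c) \<otimes> x \<otimes> (g \<otimes> c) = inv x"
proof -
  have c: "c \<in> carrier G" "inv c \<otimes> x \<otimes> c = x"
    using assms(1,4) centralizer_elem_conj by auto
  have "inv (g \<otimes> c) \<otimes> x \<otimes> (g \<otimes> c) = inv c \<otimes> (inv g \<otimes> x \<otimes> g) \<otimes> c"
    using assms(1,2) c(1) by (simp add: inv_mult_group m_assoc)
  also have "\<dots> = inv x"
    using assms(1,3) c conj_inv by simp
  finally show ?thesis .
qed

lemma (in group) square_in_centralizer_elem_if_inverts:
  assumes "x \<in> carrier G" "g \<in> carrier G" "inv g \<otimes> x \<otimes> g = inv x"
  shows "g [^] (2::nat) \<in> centralizer_elem G x"
proof -
  have "inv (g \<otimes> g) \<otimes> x \<otimes> (g \<otimes> g) = inv g \<otimes> (inv g \<otimes> x \<otimes> g) \<otimes> g"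
    using assms(1,2) by (simp add: inv_mult_group m_assoc)
  also have "\<dots> = x"
    using assms conj_inv by simp
  finally show ?thesis
    using assms centralizer_elem_conj by (simp add: numeral_2_eq_2)
qed

lemma (in group) centralizer_elem_sym:
  assumes "x \<in> carrier G" "c \<in> carrier G"
  shows "c \<in> centralizer_elem G x \<longleftrightarrow> x \<in> centralizer_elem G c"
  using assms unfolding centralizer_elem_def by auto

lemma (in group) pow_in_centralizer_elem_pow:
  assumes "g \<in> carrier G"
  shows "g [^] (k::nat) \<in> centralizer_elem G (g [^] (n::nat))"
  using assms unfolding centralizer_elem_def by (simp add: nat_pow_mult add.commute)

lemma (in group) odd_ord_square_cases:
  assumes g: "g \<in> carrier G" and odd: "odd (ord (g [^] (2::nat)))"
  shows "(\<exists>k::nat. g = (g [^] (2::nat)) [^] k) \<or> ord (g [^] ord (g [^] (2::nat))) = 2"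
proof -
  define n where "n = ord (g [^] (2::nat))"
  obtain j where j: "n = 2 * j + 1"
    using odd n_def by (metis oddE)
  have "g [^] n \<otimes> g [^] n = (g [^] (2::nat)) [^] n"
    using g by (simp add: nat_pow_mult nat_pow_pow mult_2)
  also have "\<dots> = \<one>"
    using g n_def by simp
  finally have square: "g [^] n \<otimes> g [^] n = \<one>" .
  show ?thesis
  proof (cases "g [^] n = \<one>")
    case True
    have "g = g [^] n \<otimes> g"
      using True g by simp
    also have "\<dots> = (g [^] (2::nat)) [^] (j + 1)"
      using g j by (simp add: nat_pow_mult nat_pow_pow algebra_simps)
    finally show ?thesis by blast
  next
    case False
    then show ?thesis
      using ord_eq_two_if_square_eq_one square g n_def by simp
  qed
qed

lemma prime_power_if_unique_prime_divisor:
  fixes n q :: nat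
  assumes "n \<noteq> 0" "Factorial_Ring.prime q" "\<And>p. Factorial_Ring.prime p \<Longrightarrow> p dvd n \<Longrightarrow> p = q"
  shows "\<exists>k. n = q ^ k"
proof (rule ccontr)
  assume "\<not> ?thesis"
  then obtain p where "p \<in> prime_factors n" "p \<noteq> q"
    using Ex_other_prime_factor[of n q] assms(1,2) by auto
  then show False
    using assms(3) by (auto simp: prime_factors_dvd)
qed

lemma three_power_if_odd:
  fixes n :: nat
  assumes "odd n" "\<And>p. Factorial_Ring.prime p \<Longrightarrow> p dvd n \<Longrightarrow> p \<in> {2, 3}"
  shows "\<exists>k. n = 3 ^ k"
proof (rule prime_power_if_unique_prime_divisor)
  fix p :: nat assume p: "Factorial_Ring.prime p" "p dvd n"
  then show "p = 3"
    using assms by (auto dest: dvd_trans)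
qed (use assms odd_pos in auto)

lemma (in group) pow_nine_eq_one_if_ord_three_power:
  assumes "c \<in> carrier G" "ord c = 3 ^ k" "ord c \<le> 9"
  shows "c [^] (9::nat) = \<one>"
proof -
  have "k \<le> 2"
  proof (rule ccontr)
    assume "\<not> k \<le> 2"
    then have "(3::nat) ^ 3 \<le> 3 ^ k"
      by (intro power_increasing) auto
    then show False
      using assms by simp
  qed
  then have "ord c dvd 3 ^ 2"
    using assms(2) le_imp_power_dvd by metis
  then show ?thesis
    using pow_eq_id assms(1) by simp
qed

lemma (in group) abelian_subset_if_conj_inverts:
  assumes H: "subgroup H G" and a: "a \<in> carrier G"
    and inverts: "\<And>c. c \<in> H \<Longrightarrow> inv a \<otimes> c \<otimes> a = inv c"
  shows "abelian_subset G H"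
  unfolding abelian_subset_def
proof (intro ballI)
  fix c d assume cd: "c \<in> H" "d \<in> H"
  then have cdG: "c \<in> carrier G" "d \<in> carrier G"
    using H subgroup.subset by blast+
  have "inv (c \<otimes> d) = inv a \<otimes> (c \<otimes> d) \<otimes> a"
    using inverts cd H by (simp add: subgroup.m_closed)
  also have "\<dots> = (inv a \<otimes> c \<otimes> a) \<otimes> (inv a \<otimes> d \<otimes> a)"
    using a cdG by (simp add: m_assoc) (simp flip: m_assoc)
  also have "\<dots> = inv (d \<otimes> c)"
    using inverts cd cdG by (simp add: inv_mult_group)
  finally show "c \<otimes> d = d \<otimes> c"
    using cdG by (metis inv_inv m_closed)
qed

lemma (in group) ord_mult_le_two_if_conj_inverts:
  assumes "a \<in> carrier G" "ord a = 2" "c \<in> carrier G" "inv a \<otimes> c \<otimes> a = inv c"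
  shows "ord (a \<otimes> c) \<le> 2"
proof -
  have "(a \<otimes> c) \<otimes> (a \<otimes> c) = (inv a \<otimes> c \<otimes> a) \<otimes> c"
    using assms(1-3) inv_eq_self_if_ord_two by (simp add: m_assoc)
  then have "(a \<otimes> c) \<otimes> (a \<otimes> c) = \<one>"
    using assms by simp
  then show ?thesis
    using square_eq_one_iff_ord_dvd_two assms by (simp add: dvd_imp_le)
qed

locale involution_centralizers_2_groups = group +
  assumes ord_in_centralizer_involution:
    "\<lbrakk>i \<in> carrier G; ord i = 2; y \<in> centralizer_elem G i\<rbrakk> \<Longrightarrow> \<exists>m. ord y = 2 ^ m"
begin

lemma eq_one_if_odd_ord_commutes_involution:
  assumes "i \<in> carrier G" "ord i = 2" "y \<in> centralizer_elem G i" "odd (ord y)"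
  shows "y = \<one>"
proof -
  obtain m where "ord y = 2 ^ m"
    using ord_in_centralizer_involution assms(1-3) by blast
  then have "ord y = 1"
    using assms(4) by simp
  then show ?thesis
    using assms(3) ord_eq_1 unfolding centralizer_elem_def by blast
qed

lemma centralizer_elem_odd_ord:
  assumes x: "x \<in> carrier G" "odd (ord x)" "x \<noteq> \<one>"
    and c: "c \<in> centralizer_elem G x" "ord c \<noteq> 0"
  shows "odd (ord c)"
proof
  assume "even (ord c)"
  then obtain q where q: "ord c = 2 * q" "q \<noteq> 0"
    using c(2) by auto
  have cG: "c \<in> carrier G"
    using c(1) unfolding centralizer_elem_def by blast
  have "ord (c [^] q) = 2"
    using ord_pow[OF cG, of q] q by simp
  moreover have "x \<in> centralizer_elem G (c [^] q)"
    using pow_in_centralizer_elem[OF x(1) c(1)] centralizer_elem_sym x(1) cG by blast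
  ultimately show False
    using eq_one_if_odd_ord_commutes_involution x cG by blast
qed

lemma centralizer_elem_inverted:
  assumes x: "x \<in> carrier G" and a: "a \<in> carrier G" "ord a = 2" "inv a \<otimes> x \<otimes> a = inv x"
    and odd: "\<And>c. c \<in> centralizer_elem G x \<Longrightarrow> odd (ord c)"
    and c: "c \<in> centralizer_elem G x"
  shows "inv a \<otimes> c \<otimes> a = inv c"
proof -
  define g where "g = a \<otimes> c"
  define w where "w = g [^] (2::nat)"
  have cG: "c \<in> carrier G" and gG: "g \<in> carrier G"
    using c a unfolding centralizer_elem_def g_def by auto
  have wC: "w \<in> centralizer_elem G x"
    unfolding w_def g_def
    using square_in_centralizer_elem_if_inverts inverts_mult_centralizer_elem x a c cG by simp
  have "w = \<one>"
    using odd_ord_square_cases[OF gG odd[OF wC[unfolded w_def]]] unfolding w_def[symmetric]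
  proof (elim disjE exE)
    fix k :: nat assume "g = w [^] k"
    then have "g \<otimes> inv c \<in> centralizer_elem G x"
      using subgroup_centralizer_elem[OF x] pow_in_centralizer_elem[OF x wC] c
      by (simp add: subgroup.m_closed subgroup.m_inv_closed)
    then have "a \<in> centralizer_elem G x"
      using a cG unfolding g_def by (simp add: m_assoc)
    then show ?thesis
      using odd a by fastforce
  next
    assume "ord (g [^] ord w) = 2"
    then show ?thesis
      using eq_one_if_odd_ord_commutes_involution pow_in_centralizer_elem_pow odd[OF wC] gG
      unfolding w_def by blast
  qed
  then have "inv a \<otimes> c \<otimes> a \<otimes> c = \<one>"
    using a cG inv_eq_self_if_ord_two unfolding w_def g_def by (simp add: numeral_2_eq_2 m_assoc)
  then show ?thesis
    using inv_equality a cG by simp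
qed

end

theorem lemma3:
  fixes G (structure) and x a
  assumes per: "periodic_group G"
    and primes: "{p::nat. Factorial_Ring.prime p \<and> (\<exists>g \<in> carrier G. p dvd group.ord G g)} = {2, 3}"
    and prod9: "\<And>g h. g \<in> carrier G \<Longrightarrow> h \<in> carrier G \<Longrightarrow> group.ord G g \<le> 4 \<Longrightarrow>
                  group.ord G h \<le> 4 \<Longrightarrow> group.ord G (g \<otimes> h) \<le> 9"
    and invol: "\<And>i. i \<in> carrier G \<Longrightarrow> group.ord G i = 2 \<Longrightarrow>
                  locally_cyclic G (centralizer_elem G i) \<and> is_p_subgroup G 2 (centralizer_elem G i)"
    and x: "x \<in> carrier G" "group.ord G x = 3"
    and a: "a \<in> carrier G" "group.ord G a = 2"
    and ax: "inv a \<otimes> x \<otimes> a = inv x"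
  shows "abelian_subset G (centralizer_elem G x) \<and> is_p_subgroup G 3 (centralizer_elem G x)
         \<and> exponent_le G (centralizer_elem G x) 9
         \<and> (\<forall>c \<in> centralizer_elem G x. inv a \<otimes> c \<otimes> a = inv c)"
proof -
  interpret involution_centralizers_2_groups G
    using per invol
    unfolding periodic_group_def is_p_subgroup_def involution_centralizers_2_groups_def
      involution_centralizers_2_groups_axioms_def
    by blast
  let ?C = "centralizer_elem G x"
  have sub: "subgroup ?C G"
    using subgroup_centralizer_elem x by simp
  have "x \<noteq> \<one>"
    using x by auto
  then have odd: "odd (ord c)" if "c \<in> ?C" for c
    using centralizer_elem_odd_ord[OF x(1) _ _ that] x(2) per subgroup.subset[OF sub] that
    unfolding periodic_group_def by auto
  have three_power: "\<exists>k. ord c = 3 ^ k" if "c \<in> ?C" for c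
    using three_power_if_odd odd that primes subgroup.subset[OF sub] by blast
  have inverted: "inv a \<otimes> c \<otimes> a = inv c" if "c \<in> ?C" for c
    using centralizer_elem_inverted x a ax odd that by blast
  have "c [^] (9::nat) = \<one>" if "c \<in> ?C" for c
  proof -
    have cG: "c \<in> carrier G" and "ord (a \<otimes> c) \<le> 2"
      using ord_mult_le_two_if_conj_inverts a inverted[OF that] subgroup.subset[OF sub] that by auto
    moreover have "a \<otimes> (a \<otimes> c) = c"
      using a cG inv_eq_self_if_ord_two by (metis inv_closed l_inv l_one m_assoc)
    ultimately have "ord c \<le> 9"
      using prod9[of a "a \<otimes> c"] a cG by simp
    then show ?thesis
      using three_power[OF that] pow_nine_eq_one_if_ord_three_power cG by blast
  qed
  then show ?thesis
    unfolding is_p_subgroup_def exponent_le_def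
    using abelian_subset_if_conj_inverts[OF sub a(1) inverted] sub three_power inverted
    by (auto intro!: exI[of _ 9])
qed

end
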